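(* Let $\alpha\in(1,2)$ and let $K\ge3$ be an integer. Then \[ \sigma_{\alpha,K}:=\left(\frac{\left(1-\frac1K\right)^{\frac{1-\alpha}{3-\alpha}}+\left(1+\frac1K\right)^{\frac{1-\alpha}{3-\alpha}}}{2}\right)^{3-\alpha} \] satisfies \[ 1+\frac{\alpha-1}{3-\alpha}\cdot\frac1{K^2}\ \le\ \sigma_{\alpha,K}\ \le\ 1+\frac{7(\alpha-1)}{6(3-\alpha)}\cdot\frac1{K^2}. \] *)

theory Defs
  imports Complex_Main
begin

end

theory Submission
  imports Defs
begin

(*
  Put s = (alpha - 1) / (3 - alpha), which lies in (0, 1), and x = 1/K <= 1/3. Then 3 - alpha = 2 / (1 + s)
  and sigma = M powr (2 / (1 + s)) with M the mean of (1 - x) powr (-s) and (1 + x) powr (-s).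

  A second-order Taylor expansion of the even function (1 + x) powr r + (1 - x) powr r has the
  remainder r (r - 1) ((1 + t) powr (r - 2) + (1 - t) powr (r - 2)) x^2 / 2, and for r <= 2 the
  bracket is at least 2 by AM-GM. With r = -s this gives M >= 1 + s (1 + s) x^2 / 2, and Bernoulli's
  inequality for the exponent 2 / (1 + s) >= 1 yields the lower bound.

  For the upper bound, 2 M = ((1 + x) powr s + (1 - x) powr s) * (1 - x^2) powr (-s). The first
  factor is at most 2 - s (1 - s) x^2 by the same expansion with r = s, and the second is at most
  1 + s x^2 + (729/1024) s (1 + s) x^4 by a Taylor expansion whose remainder is controlled by
  x^2 <= 1/9. Finally (1 + u) powr q <= 1 + q u + q (q - 1) u^2 / 2 for 1 <= q <= 2, and an
  elementary estimate finishes.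
*)

lemma Maclaurin_order2:
  fixes f f' f'' :: "real \<Rightarrow> real"
  assumes "0 < h"
    and "\<And>t. 0 \<le> t \<Longrightarrow> t \<le> h \<Longrightarrow> (f has_real_derivative f' t) (at t)"
    and "\<And>t. 0 \<le> t \<Longrightarrow> t \<le> h \<Longrightarrow> (f' has_real_derivative f'' t) (at t)"
  shows "\<exists>t. 0 < t \<and> t < h \<and> f h = f 0 + f' 0 * h + f'' t / 2 * h\<^sup>2"
proof -
  define D where "D = (\<lambda>m::nat. if m = 0 then f else if m = 1 then f' else f'')"
  have "\<exists>t. 0 < t \<and> t < h \<and> f h = (\<Sum>m<2. D m 0 / fact m * h ^ m) + D 2 t / fact 2 * h\<^sup>2"
    by (rule Maclaurin) (use assms in \<open>auto simp: D_def less_2_cases_iff\<close>)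
  then show ?thesis
    by (auto simp: D_def numeral_2_eq_2)
qed

lemma has_real_derivative_powr_affine:
  fixes c e t :: real
  assumes "0 < 1 + c * t"
  shows "((\<lambda>t. (1 + c * t) powr e) has_real_derivative e * c * (1 + c * t) powr (e - 1)) (at t)"
  using DERIV_fun_powr[of "\<lambda>t. 1 + c * t" c t e] assms
  by (auto intro!: derivative_eq_intros simp: algebra_simps)

lemma Maclaurin_powr_affine:
  fixes c e h :: real
  assumes "0 < h" and "\<And>t. 0 \<le> t \<Longrightarrow> t \<le> h \<Longrightarrow> 0 < 1 + c * t"
  shows "\<exists>t. 0 < t \<and> t < h \<and> (1 + c * h) powr e
     = 1 + e * c * h + e * (e - 1) * c\<^sup>2 * (1 + c * t) powr (e - 2) / 2 * h\<^sup>2"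
proof -
  have "\<exists>t. 0 < t \<and> t < h \<and> (1 + c * h) powr e
      = (1 + c * 0) powr e + e * c * (1 + c * 0) powr (e - 1) * h
        + e * c * ((e - 1) * c * (1 + c * t) powr (e - 1 - 1)) / 2 * h\<^sup>2"
    using assms
    by (intro Maclaurin_order2 has_real_derivative_powr_affine DERIV_cmult) auto
  then show ?thesis
    by (auto simp: power2_eq_square algebra_simps)
qed

lemma Maclaurin_powr_symmetric_sum:
  fixes r x :: real
  assumes "0 < x" "x < 1"
  shows "\<exists>t. 0 < t \<and> t < x \<and> (1 + x) powr r + (1 - x) powr r
     = 2 + r * (r - 1) * ((1 + t) powr (r - 2) + (1 - t) powr (r - 2)) / 2 * x\<^sup>2"
proof -
  have pos: "0 < 1 + t" "0 < 1 + (-1) * t" if "0 \<le> t" "t \<le> x" for t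
    using that assms by auto
  have "\<exists>t. 0 < t \<and> t < x \<and> (1 + 1 * x) powr r + (1 + (-1) * x) powr r
      = (1 + 1 * 0) powr r + (1 + (-1) * 0) powr r
        + (r * 1 * (1 + 1 * 0) powr (r - 1) + r * (-1) * (1 + (-1) * 0) powr (r - 1)) * x
        + (r * 1 * ((r - 1) * 1 * (1 + 1 * t) powr (r - 1 - 1))
           + r * (-1) * ((r - 1) * (-1) * (1 + (-1) * t) powr (r - 1 - 1))) / 2 * x\<^sup>2"
    using pos assms
    by (intro Maclaurin_order2 DERIV_add DERIV_cmult has_real_derivative_powr_affine) auto
  then show ?thesis
    by (auto simp: algebra_simps)
qed

lemma two_le_powr_add_powr:
  fixes e t :: real
  assumes "e \<le> 0" "0 \<le> t" "t < 1"
  shows "2 \<le> (1 + t) powr e + (1 - t) powr e"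
proof -
  have "0 < 1 - t\<^sup>2"
    using assms by (simp add: abs_square_less_1)
  then have "1 \<le> (1 - t\<^sup>2) powr e"
    using powr_mono2'[of e "1 - t\<^sup>2" 1] assms by simp
  also have "\<dots> = (1 + t) powr e * (1 - t) powr e"
    using assms by (simp add: powr_mult[symmetric] power2_eq_square algebra_simps)
  finally have "1 \<le> sqrt ((1 + t) powr e * (1 - t) powr e)"
    by simp
  also have "\<dots> \<le> ((1 + t) powr e + (1 - t) powr e) / 2"
    by (rule arith_geo_mean_sqrt) auto
  finally show ?thesis
    by simp
qed

lemma powr_symmetric_sum_ge:
  fixes r x :: real
  assumes "r \<le> 0" "0 < x" "x < 1"
  shows "2 + r * (r - 1) * x\<^sup>2 \<le> (1 + x) powr r + (1 - x) powr r"
proof -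
  obtain t where t: "0 < t" "t < x" and expand: "(1 + x) powr r + (1 - x) powr r
      = 2 + r * (r - 1) * ((1 + t) powr (r - 2) + (1 - t) powr (r - 2)) / 2 * x\<^sup>2"
    using Maclaurin_powr_symmetric_sum[OF assms(2,3)] by blast
  have "r * (r - 1) * 2 \<le> r * (r - 1) * ((1 + t) powr (r - 2) + (1 - t) powr (r - 2))"
    using assms t by (intro mult_left_mono two_le_powr_add_powr) (auto simp: mult_nonpos_nonpos)
  then show ?thesis
    unfolding expand by (intro add_left_mono mult_right_mono) auto
qed

lemma powr_symmetric_sum_le:
  fixes r x :: real
  assumes "0 \<le> r" "r \<le> 1" "0 < x" "x < 1"
  shows "(1 + x) powr r + (1 - x) powr r \<le> 2 - r * (1 - r) * x\<^sup>2"
proof -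
  obtain t where t: "0 < t" "t < x" and expand: "(1 + x) powr r + (1 - x) powr r
      = 2 + r * (r - 1) * ((1 + t) powr (r - 2) + (1 - t) powr (r - 2)) / 2 * x\<^sup>2"
    using Maclaurin_powr_symmetric_sum[OF assms(3,4)] by blast
  have "r * (1 - r) * 2 * x\<^sup>2 \<le> r * (1 - r) * ((1 + t) powr (r - 2) + (1 - t) powr (r - 2)) * x\<^sup>2"
    using assms t by (intro mult_right_mono mult_left_mono two_le_powr_add_powr) auto
  then show ?thesis
    unfolding expand by (simp add: field_simps)
qed

lemma Bernoulli_inequality_powr:
  fixes q u :: real
  assumes "1 \<le> q" "0 \<le> u"
  shows "1 + q * u \<le> (1 + u) powr q"
proof (cases "u = 0")
  case False
  then obtain t where expand: "(1 + 1 * u) powr q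
      = 1 + q * 1 * u + q * (q - 1) * 1\<^sup>2 * (1 + 1 * t) powr (q - 2) / 2 * u\<^sup>2"
    using Maclaurin_powr_affine[of u 1 q] assms by force
  have "0 \<le> q * (q - 1) * 1\<^sup>2 * (1 + 1 * t) powr (q - 2) / 2 * u\<^sup>2"
    using assms by simp
  then show ?thesis
    using expand by simp
qed simp

lemma powr_le_quadratic:
  fixes q u :: real
  assumes "1 \<le> q" "q \<le> 2" "0 \<le> u"
  shows "(1 + u) powr q \<le> 1 + q * u + q * (q - 1) / 2 * u\<^sup>2"
proof (cases "u = 0")
  case False
  then obtain t where t: "0 < t" "t < u" and expand: "(1 + 1 * u) powr q
      = 1 + q * 1 * u + q * (q - 1) * 1\<^sup>2 * (1 + 1 * t) powr (q - 2) / 2 * u\<^sup>2"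
    using Maclaurin_powr_affine[of u 1 q] assms by force
  have "(1 + t) powr (q - 2) \<le> 1"
    using powr_mono2'[of "q - 2" 1 "1 + t"] t assms by simp
  then have "q * (q - 1) / 2 * u\<^sup>2 * (1 + t) powr (q - 2) \<le> q * (q - 1) / 2 * u\<^sup>2"
    using assms by (intro mult_left_le) auto
  then show ?thesis
    using expand by (simp add: algebra_simps)
qed simp

lemma one_minus_powr_le:
  fixes e y :: real
  assumes "e \<le> 0" "0 < y" "y < 1"
  shows "(1 - y) powr e \<le> 1 - e * y + e * (e - 1) / 2 * (1 - y) powr (e - 2) * y\<^sup>2"
proof -
  obtain t where t: "0 < t" "t < y" and expand: "(1 + (-1) * y) powr e
      = 1 + e * (-1) * y + e * (e - 1) * (-1)\<^sup>2 * (1 + (-1) * t) powr (e - 2) / 2 * y\<^sup>2"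
    using Maclaurin_powr_affine[of y "-1" e] assms by force
  have "(1 - t) powr (e - 2) \<le> (1 - y) powr (e - 2)"
    using t assms by (intro powr_mono2') auto
  then have "e * (e - 1) / 2 * y\<^sup>2 * (1 - t) powr (e - 2) \<le> e * (e - 1) / 2 * y\<^sup>2 * (1 - y) powr (e - 2)"
    using assms by (intro mult_left_mono) (auto simp: mult_nonpos_nonpos)
  then show ?thesis
    using expand by (simp add: algebra_simps)
qed

lemma neg_powr_symmetric_sum_eq:
  fixes s x :: real
  assumes "\<bar>x\<bar> < 1"
  shows "(1 - x) powr (-s) + (1 + x) powr (-s) = ((1 + x) powr s + (1 - x) powr s) * (1 - x\<^sup>2) powr (-s)"
proof -
  have pos: "0 < 1 - x" "0 < 1 + x"
    using assms by auto
  have "(1 - x\<^sup>2) powr (-s) = (1 - x) powr (-s) * (1 + x) powr (-s)"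
    using pos by (simp add: powr_mult[symmetric] power2_eq_square algebra_simps)
  moreover have "(1 + x) powr s * (1 + x) powr (-s) = 1" "(1 - x) powr s * (1 - x) powr (-s) = 1"
    using pos by (simp_all add: powr_add[symmetric])
  ultimately show ?thesis
    by (simp add: algebra_simps)
qed

lemma symmetric_neg_powr_mean_ge:
  fixes s x :: real
  assumes "0 \<le> s" "0 < x" "x < 1"
  shows "1 + s * (1 + s) / 2 * x\<^sup>2 \<le> ((1 - x) powr (-s) + (1 + x) powr (-s)) / 2"
  using powr_symmetric_sum_ge[of "-s" x] assms by (simp add: field_simps)

lemma one_minus_neg_powr_le:
  fixes s y :: real
  assumes "0 \<le> s" "s \<le> 1" "0 < y" "y \<le> 1/9"
  shows "(1 - y) powr (-s) \<le> 1 + s * y + 729/1024 * s * (1 + s) * y\<^sup>2"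
proof -
  have "(1 - y) powr (-s - 2) \<le> (1 - y) powr (-3)"
    using assms by (intro powr_mono') auto
  also have "\<dots> \<le> (8/9) powr (-3)"
    using assms by (intro powr_mono2') auto
  also have "\<dots> = 729/512"
    by (simp add: powr_minus_divide powr_numeral power3_eq_cube)
  finally have remainder: "(1 - y) powr (-s - 2) \<le> 729/512" .
  have "(1 - y) powr (-s) \<le> 1 + s * y + s * (1 + s) / 2 * y\<^sup>2 * (1 - y) powr (-s - 2)"
    using one_minus_powr_le[of "-s" y] assms by (simp add: algebra_simps)
  also have "\<dots> \<le> 1 + s * y + s * (1 + s) / 2 * y\<^sup>2 * (729/512)"
    using remainder assms by (intro add_left_mono mult_left_mono) auto
  finally show ?thesis
    by simp
qed

lemma sigma_upper_bound_arith:
  fixes q s y U :: real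
  assumes s: "0 \<le> s" "s \<le> 1" and y: "0 \<le> y" "y \<le> 1/9" and q: "q * (1 + s) = 2"
    and U: "0 \<le> U" "U \<le> (1 - s * (1 - s) / 2 * y) * (1 + s * y + 729/1024 * s * (1 + s) * y\<^sup>2) - 1"
  shows "q * U + q * (q - 1) / 2 * U\<^sup>2 \<le> 7/6 * s * y"
proof -
  define w where "w = s * y * (1 + 729/512 * y) / 2"
  \<comment> \<open>Dropping d would lose the bound, e.g. at s = 1/2, y = 1/9.\<close>
  define d where "d = s\<^sup>2 * (1 - s) * y\<^sup>2 / 2"
  have q_eq: "q = 2 / (1 + s)"
    using q s by (simp add: field_simps)
  have q_ge: "1 \<le> q"
    using s by (simp add: q_eq field_simps)
  have d_ge: "0 \<le> d"
    using s by (simp add: d_def)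
  have "(1 - s * (1 - s) / 2 * y) * (1 + s * y + 729/1024 * s * (1 + s) * y\<^sup>2) - 1
      = (1 + s) * w - d - s * (1 - s) * y / 2 * (729/1024 * s * (1 + s) * y\<^sup>2)"
    by (simp add: w_def d_def power2_eq_square field_simps)
  also have "\<dots> \<le> (1 + s) * w - d"
    using s y by simp
  finally have U_le: "U \<le> (1 + s) * w - d"
    using U(2) by linarith
  have "q * U \<le> q * ((1 + s) * w - d)"
    using U_le q_ge by simp
  also have "\<dots> = 2 * w - q * d"
    unfolding q[symmetric] by (simp add: algebra_simps)
  finally have linear: "q * U \<le> 2 * w - q * d" .
  have "U\<^sup>2 \<le> ((1 + s) * w)\<^sup>2"
    using U(1) U_le d_ge by (intro power_mono) auto
  then have "q * (q - 1) / 2 * U\<^sup>2 \<le> q * (q - 1) / 2 * ((1 + s) * w)\<^sup>2"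
    using q_ge by (intro mult_left_mono) auto
  also have "\<dots> = (q * (1 + s)) * (q * (1 + s) - (1 + s)) / 2 * w\<^sup>2"
    by (simp add: power2_eq_square field_simps)
  also have "\<dots> = (1 - s) * w\<^sup>2"
    unfolding q by simp
  also have "\<dots> \<le> q * d"
  proof -
    have "(1 + 729/512 * y)\<^sup>2 \<le> (1 + 729/512 * (1/9))\<^sup>2"
      using y by (intro power_mono) auto
    also have "\<dots> \<le> 4 / (1 + s)"
      using s by (simp add: field_simps power2_eq_square)
    finally have "(1 + s) * (1 + 729/512 * y)\<^sup>2 \<le> 4"
      using s by (simp add: field_simps)
    then have "(1 - s) * s\<^sup>2 * y\<^sup>2 * ((1 + s) * (1 + 729/512 * y)\<^sup>2) \<le> (1 - s) * s\<^sup>2 * y\<^sup>2 * 4"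
      using s by (intro mult_left_mono) auto
    then show ?thesis
      using s by (simp add: q_eq w_def d_def field_simps power2_eq_square)
  qed
  finally have quadratic: "q * (q - 1) / 2 * U\<^sup>2 \<le> q * d" .
  have "s * y * (1 + 729/512 * y) \<le> s * y * (7/6)"
    using s y by (intro mult_left_mono) auto
  then have "2 * w \<le> 7/6 * s * y"
    by (simp add: w_def)
  then show ?thesis
    using linear quadratic by linarith
qed

lemma sigma_lower_bound:
  fixes s x :: real
  assumes "0 \<le> s" "s \<le> 1" "0 < x" "x < 1"
  shows "1 + s * x\<^sup>2 \<le> (((1 - x) powr (-s) + (1 + x) powr (-s)) / 2) powr (2 / (1 + s))"
proof -
  define u where "u = s * (1 + s) / 2 * x\<^sup>2"
  have "1 + s * x\<^sup>2 = 1 + 2 / (1 + s) * u"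
    using assms by (simp add: u_def)
  also have "\<dots> \<le> (1 + u) powr (2 / (1 + s))"
    using assms by (intro Bernoulli_inequality_powr) (auto simp: u_def field_simps)
  also have "\<dots> \<le> (((1 - x) powr (-s) + (1 + x) powr (-s)) / 2) powr (2 / (1 + s))"
    using symmetric_neg_powr_mean_ge[of s x] assms by (intro powr_mono2) (auto simp: u_def)
  finally show ?thesis .
qed

lemma sigma_upper_bound:
  fixes s x :: real
  assumes s: "0 \<le> s" "s \<le> 1" and x: "0 < x" "x \<le> 1/3"
  shows "(((1 - x) powr (-s) + (1 + x) powr (-s)) / 2) powr (2 / (1 + s)) \<le> 1 + 7/6 * s * x\<^sup>2"
proof -
  define M where "M = ((1 - x) powr (-s) + (1 + x) powr (-s)) / 2"
  define q where "q = 2 / (1 + s)"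
  have q: "q * (1 + s) = 2" "1 \<le> q" "q \<le> 2"
    using s by (auto simp: q_def field_simps)
  have y: "0 < x\<^sup>2" "x\<^sup>2 \<le> 1/9"
    using x power_mono[of x "1/3" 2] by (auto simp: power_divide)
  have "M = ((1 + x) powr s + (1 - x) powr s) / 2 * (1 - x\<^sup>2) powr (-s)"
    using x by (simp add: M_def neg_powr_symmetric_sum_eq)
  also have "\<dots> \<le> (1 - s * (1 - s) / 2 * x\<^sup>2) * (1 + s * x\<^sup>2 + 729/1024 * s * (1 + s) * (x\<^sup>2)\<^sup>2)"
  proof (intro mult_mono)
    show "((1 + x) powr s + (1 - x) powr s) / 2 \<le> 1 - s * (1 - s) / 2 * x\<^sup>2"
      using powr_symmetric_sum_le[of s x] s x by simp
    show "(1 - x\<^sup>2) powr (-s) \<le> 1 + s * x\<^sup>2 + 729/1024 * s * (1 + s) * (x\<^sup>2)\<^sup>2"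
      using s y by (intro one_minus_neg_powr_le) auto
    have "s * (1 - s) * x\<^sup>2 \<le> 1 * 1 * 1"
      using s y by (intro mult_mono) auto
    then show "0 \<le> 1 - s * (1 - s) / 2 * x\<^sup>2"
      by simp
  qed simp_all
  finally have M_le: "M - 1 \<le> (1 - s * (1 - s) / 2 * x\<^sup>2) * (1 + s * x\<^sup>2 + 729/1024 * s * (1 + s) * (x\<^sup>2)\<^sup>2) - 1"
    by simp
  have "0 \<le> s * (1 + s) / 2 * x\<^sup>2"
    using s by simp
  then have M_ge: "0 \<le> M - 1"
    using symmetric_neg_powr_mean_ge[of s x] s x unfolding M_def by linarith
  have "M powr q \<le> 1 + q * (M - 1) + q * (q - 1) / 2 * (M - 1)\<^sup>2"
    using powr_le_quadratic[of q "M - 1"] q M_ge by simp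
  also have "\<dots> \<le> 1 + 7/6 * s * x\<^sup>2"
    using sigma_upper_bound_arith[OF s _ _ q(1) M_ge M_le] y by simp
  finally show ?thesis
    by (simp add: M_def q_def)
qed

theorem proposition2:
  fixes \<alpha> :: real and K :: nat
  assumes "1 < \<alpha>" and "\<alpha> < 2" and "K \<ge> 3"
  shows "1 + (\<alpha> - 1) / (3 - \<alpha>) * (1 / real K ^ 2)
           \<le> ((((1 - 1 / real K) powr ((1 - \<alpha>) / (3 - \<alpha>))
                + (1 + 1 / real K) powr ((1 - \<alpha>) / (3 - \<alpha>))) / 2) powr (3 - \<alpha>))
         \<and> ((((1 - 1 / real K) powr ((1 - \<alpha>) / (3 - \<alpha>))
                + (1 + 1 / real K) powr ((1 - \<alpha>) / (3 - \<alpha>))) / 2) powr (3 - \<alpha>))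
           \<le> 1 + 7 * (\<alpha> - 1) / (6 * (3 - \<alpha>)) * (1 / real K ^ 2)"
proof -
  define s where "s = (\<alpha> - 1) / (3 - \<alpha>)"
  define x where "x = 1 / real K"
  have s: "0 \<le> s" "s \<le> 1"
    using assms by (auto simp: s_def field_simps)
  have x: "0 < x" "x \<le> 1/3"
    using assms by (auto simp: x_def field_simps)
  have x_lt_1: "x < 1"
    using x by simp
  have exponents: "(1 - \<alpha>) / (3 - \<alpha>) = -s" "3 - \<alpha> = 2 / (1 + s)"
    using assms by (auto simp: s_def field_simps)
  have bounds: "(\<alpha> - 1) / (3 - \<alpha>) * (1 / real K ^ 2) = s * x\<^sup>2"
    "7 * (\<alpha> - 1) / (6 * (3 - \<alpha>)) * (1 / real K ^ 2) = 7/6 * s * x\<^sup>2"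
    by (simp_all add: s_def x_def power_one_over)
  show ?thesis
    unfolding bounds unfolding x_def[symmetric] exponents(1) unfolding exponents(2)
    using sigma_lower_bound[OF s x(1) x_lt_1] sigma_upper_bound[OF s x] by simp
qed

end
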